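(* For $n,p\ge1$, the number $\alpha'_{n,p}$ of saturated $n\times p$ tableaux in which a fixed given cell is marked (independent of the chosen cell) satisfies $$\alpha'_{n,p}=\frac1{np}\left.\frac{d}{dt}\alpha_{n,p}(t)\right|_{t=1}=-(n-1)!\sum_{i=0}^n\frac{r_{n-i+1}}{(n-i)!}\sum_{\lambda\vdash i}\frac{P'_\lambda(1)\,(1+P_\lambda(1))^{p-1}}{\lambda!}.$$
   Context: An $n\times p$ tableau is a set of marked cells in an $n\times p$ grid; it is saturated if whenever cells $(x,x'),(x,y'),(y,y')$ are marked then $(y,x')$ is marked. $\alpha_{n,p}(t)=\sum_j\alpha_{j;n,p}t^j$ with $\alpha_{j;n,p}$ the number of saturated $n\times p$ tableaux with $j$ marked cells. For an integer partition $\lambda=[\lambda_1,\dots,\lambda_k]$, $P_\lambda(t)=\sum_j t^{\lambda_j}$, $P'_\lambda$ its derivative, and $\lambda!=\left(\prod_j\lambda_j!\right)\left(\prod_i\mathrm{mult}_i(\lambda)!\right)$ with $\mathrm{mult}_i(\lambda)$ the number of parts equal to $i$. $r_k$ are the Rao Uppuluri-Carpenter numbers: $\sum_{k\ge0}r_k\frac{t^k}{k!}=\exp(1-e^t)$. *)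

theory Defs
  imports "HOL-Computational_Algebra.Computational_Algebra" "HOL-Library.Multiset"
begin

text \<open>Cells of an n x p grid are pairs (row, column) with row < n, column < p (0-based).
  A tableau is a set of marked cells.\<close>
definition tableau :: "nat \<Rightarrow> nat \<Rightarrow> (nat \<times> nat) set \<Rightarrow> bool" where
  "tableau n p T \<longleftrightarrow> T \<subseteq> {0..<n} \<times> {0..<p}"

definition saturated :: "(nat \<times> nat) set \<Rightarrow> bool" where
  "saturated T \<longleftrightarrow> (\<forall>x y x' y'. (x,x') \<in> T \<and> (x,y') \<in> T \<and> (y,y') \<in> T \<longrightarrow> (y,x') \<in> T)"

definition alpha_coeff :: "nat \<Rightarrow> nat \<Rightarrow> nat \<Rightarrow> nat" where
  "alpha_coeff j n p = card {T. tableau n p T \<and> saturated T \<and> card T = j}"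

text \<open>alpha_{n,p}(t) = sum_j alpha_{j;n,p} t^j (j ranges over 0..np, the only nonzero terms).\<close>
definition alpha_poly :: "nat \<Rightarrow> nat \<Rightarrow> real poly" where
  "alpha_poly n p = (\<Sum>j\<le>n*p. monom (real (alpha_coeff j n p)) j)"

definition rUC :: "nat \<Rightarrow> real" where
  "rUC k = fact k * fps_nth (fps_compose (fps_exp 1) (1 - fps_exp 1)) k"

definition partitions_of :: "nat \<Rightarrow> nat multiset set" where
  "partitions_of i = {lam. (\<forall>k\<in>#lam. 0 < k) \<and> sum_mset lam = i}"

definition P_part :: "nat multiset \<Rightarrow> real poly" where
  "P_part lam = sum_mset (image_mset (\<lambda>k. monom 1 k) lam)"

definition part_fact :: "nat multiset \<Rightarrow> real" where
  "part_fact lam = prod_mset (image_mset fact lam) * (\<Prod>i\<in>set_mset lam. fact (count lam i))"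

end

theory Submission
  imports Defs
begin

text \<open>In a saturated tableau two rows that share a marked column have the same set of marked
  columns. Hence the tableau is a disjoint union of blocks \<open>C\<^sub>i \<times> D\<^sub>i\<close> with pairwise disjoint
  row sets \<open>C\<^sub>i\<close> and pairwise disjoint nonempty column sets \<open>D\<^sub>i\<close>. Removing the block through a
  given cell \<open>(a, b)\<close> leaves an arbitrary saturated tableau on the remaining rows and columns,
  which expresses \<open>\<alpha>'\<close> through the numbers \<open>A(m, q)\<close> (\<open>sat_number m q\<close>) of saturated \<open>m \<times> q\<close>
  tableaux. Removing instead the block through a fixed row gives a recurrence for \<open>A(m, q)\<close> in
  \<open>m\<close>, i.e. a differential equation for the exponential generating function, whose solution is
  \<open>e\<^sup>x exp(1 - e\<^sup>x) \<Sum>\<^sub>k (k + 1)\<^sup>q (e\<^sup>x - 1)\<^sup>k / k!\<close>.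

  On the other side, \<open>\<Sum> 1/\<lambda>!\<close> over the partitions \<open>\<lambda>\<close> of \<open>i\<close> with \<open>k\<close> parts is the coefficient of
  \<open>x\<^sup>i\<close> in \<open>(e\<^sup>x - 1)\<^sup>k / k!\<close>, and \<open>r\<^sub>k\<^sub>+\<^sub>1 / k!\<close> is the coefficient of \<open>x\<^sup>k\<close> in the derivative of
  \<open>exp(1 - e\<^sup>x)\<close>. So the right-hand side is a coefficient of a product of two such derivatives,
  which is the same binomial convolution of the \<open>A(m, q)\<close>. The first equation is double counting:
  every cell is marked in equally many saturated tableaux.\<close>

section \<open>Block decomposition of saturated tableaux\<close>

definition sat_tableaux :: "nat set \<Rightarrow> nat set \<Rightarrow> (nat \<times> nat) set set" where
  "sat_tableaux R S = {T. T \<subseteq> R \<times> S \<and> saturated T}"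

definition row :: "(nat \<times> nat) set \<Rightarrow> nat \<Rightarrow> nat set" where
  "row T x = {y. (x, y) \<in> T}"

definition row_class :: "nat set \<Rightarrow> (nat \<times> nat) set \<Rightarrow> nat \<Rightarrow> nat set" where
  "row_class R T a = {x \<in> R. row T x = row T a}"

lemma finite_sat_tableaux [simp]: "finite R \<Longrightarrow> finite S \<Longrightarrow> finite (sat_tableaux R S)"
  unfolding sat_tableaux_def by (rule finite_subset[of _ "Pow (R \<times> S)"]) auto

lemma sat_tableaux_empty_rows: "sat_tableaux {} S = {{}}"
  by (auto simp: sat_tableaux_def saturated_def)

lemma saturated_row_eq:
  assumes "saturated T" "(x, y) \<in> T" "(z, y) \<in> T"
  shows "row T x = row T z"
  using assms unfolding saturated_def row_def by blast

lemma block_union_in_sat_tableaux: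
  assumes C: "C \<subseteq> R" and D: "D \<subseteq> S" and T': "T' \<in> sat_tableaux (R - C) (S - D)"
  shows "C \<times> D \<union> T' \<in> sat_tableaux R S"
proof -
  have sub: "T' \<subseteq> (R - C) \<times> (S - D)" and sat: "saturated T'"
    using T' by (auto simp: sat_tableaux_def)
  have "saturated (C \<times> D \<union> T')"
    unfolding saturated_def
  proof (intro allI impI)
    fix x y x' y'
    assume h: "(x, x') \<in> C \<times> D \<union> T' \<and> (x, y') \<in> C \<times> D \<union> T' \<and> (y, y') \<in> C \<times> D \<union> T'"
    show "(y, x') \<in> C \<times> D \<union> T'"
    proof (cases "x \<in> C")
      case True
      then have "(x, x') \<in> C \<times> D" "(x, y') \<in> C \<times> D" using h sub by auto
      then show ?thesis using h sub by auto
    next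
      case False
      then have "(x, x') \<in> T'" "(x, y') \<in> T'" using h by auto
      then have "(y, y') \<in> T'" using h sub by auto
      with \<open>(x, x') \<in> T'\<close> \<open>(x, y') \<in> T'\<close> show ?thesis using sat unfolding saturated_def by blast
    qed
  qed
  then show ?thesis using C D sub by (auto simp: sat_tableaux_def)
qed

lemma block_split:
  assumes T: "T \<in> sat_tableaux R S" and a: "a \<in> R"
  defines "C \<equiv> row_class R T a" and "D \<equiv> row T a"
  shows "T = C \<times> D \<union> (T - C \<times> D)" and "T - C \<times> D \<in> sat_tableaux (R - C) (S - D)"
    and "a \<in> C" and "C \<subseteq> R" and "D \<subseteq> S"
proof -
  have sub: "T \<subseteq> R \<times> S" and sat: "saturated T" using T by (auto simp: sat_tableaux_def)
  show "T = C \<times> D \<union> (T - C \<times> D)"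
    by (auto simp: C_def D_def row_class_def row_def)
  have outside: "x \<notin> C \<and> y \<notin> D" if "(x, y) \<in> T - C \<times> D" for x y
  proof
    show "x \<notin> C"
      using that by (auto simp: C_def D_def row_class_def row_def)
    then show "y \<notin> D"
      using that sub saturated_row_eq[OF sat, of x y a] by (auto simp: C_def D_def row_class_def row_def)
  qed
  have "saturated (T - C \<times> D)"
    using sat outside unfolding saturated_def by blast
  then show "T - C \<times> D \<in> sat_tableaux (R - C) (S - D)"
    using sub outside by (auto simp: sat_tableaux_def)
  show "a \<in> C" "C \<subseteq> R" using a by (auto simp: C_def row_class_def)
  show "D \<subseteq> S" using sub by (auto simp: D_def row_def)
qed

lemma block_union_recover:
  assumes C: "a \<in> C" "C \<subseteq> R" and D: "D \<subseteq> S" "D \<noteq> {}"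
    and T': "T' \<in> sat_tableaux (R - C) (S - D)"
  shows "row (C \<times> D \<union> T') a = D" and "row_class R (C \<times> D \<union> T') a = C"
    and "(C \<times> D \<union> T') - C \<times> D = T'"
proof -
  have sub: "T' \<subseteq> (R - C) \<times> (S - D)" using T' by (auto simp: sat_tableaux_def)
  have row_in: "row (C \<times> D \<union> T') x = D" if "x \<in> C" for x
    using that sub by (auto simp: row_def)
  have row_out: "row (C \<times> D \<union> T') x \<noteq> D" if "x \<notin> C" for x
  proof -
    have "row (C \<times> D \<union> T') x \<subseteq> S - D" using that sub by (auto simp: row_def)
    then show ?thesis using D by auto
  qed
  show "row (C \<times> D \<union> T') a = D" using row_in C by simp
  then show "row_class R (C \<times> D \<union> T') a = C"
    unfolding row_class_def using C row_in row_out by auto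
  show "(C \<times> D \<union> T') - C \<times> D = T'" using sub by auto
qed

lemma bij_betw_block_union:
  assumes a: "a \<in> R" and DD: "DD \<subseteq> {D. D \<subseteq> S \<and> D \<noteq> {}}"
  shows "bij_betw (\<lambda>((C, D), T'). C \<times> D \<union> T')
           (SIGMA (C, D):{C. a \<in> C \<and> C \<subseteq> R} \<times> DD. sat_tableaux (R - C) (S - D))
           {T \<in> sat_tableaux R S. row T a \<in> DD}"
proof -
  let ?A = "SIGMA (C, D):{C. a \<in> C \<and> C \<subseteq> R} \<times> DD. sat_tableaux (R - C) (S - D)"
    and ?B = "{T \<in> sat_tableaux R S. row T a \<in> DD}"
    and ?glue = "\<lambda>((C, D), T'). C \<times> D \<union> T'"
    and ?cut = "\<lambda>T. ((row_class R T a, row T a), T - row_class R T a \<times> row T a)"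
  have recover: "row_class R (C \<times> D \<union> T') a = C \<and> row (C \<times> D \<union> T') a = D
      \<and> C \<times> D \<union> T' - C \<times> D = T' \<and> C \<times> D \<union> T' \<in> sat_tableaux R S"
    if "a \<in> C" "C \<subseteq> R" "D \<in> DD" "T' \<in> sat_tableaux (R - C) (S - D)" for C D T'
  proof -
    have D: "D \<subseteq> S" "D \<noteq> {}" using that(3) DD by auto
    show ?thesis
      using block_union_recover[OF that(1,2) D that(4)] block_union_in_sat_tableaux[OF that(2) D(1) that(4)]
      by blast
  qed
  have split: "?glue (?cut T) = T \<and> ?cut T \<in> ?A" if "T \<in> ?B" for T
    using that block_split[of T R S a] assms(1) by auto
  have "\<forall>x\<in>?A. ?cut (?glue x) = x"
    using recover by auto
  moreover have "\<forall>T\<in>?B. ?glue (?cut T) = T"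
    using split by blast
  moreover have "?glue ` ?A \<subseteq> ?B"
    using recover by auto
  moreover have "?cut ` ?B \<subseteq> ?A"
    using split by blast
  ultimately show ?thesis
    by (rule bij_betw_byWitness)
qed

lemma card_sat_tableaux_row_in:
  assumes "finite R" "finite S" "a \<in> R" and DD: "DD \<subseteq> {D. D \<subseteq> S \<and> D \<noteq> {}}"
  shows "card {T \<in> sat_tableaux R S. row T a \<in> DD}
       = (\<Sum>C | a \<in> C \<and> C \<subseteq> R. \<Sum>D\<in>DD. card (sat_tableaux (R - C) (S - D)))"
proof -
  have "finite {C. a \<in> C \<and> C \<subseteq> R}" "finite DD"
    using assms by (auto intro: finite_subset[of _ "Pow R"] finite_subset[of _ "Pow S"])
  then have "card (SIGMA (C, D):{C. a \<in> C \<and> C \<subseteq> R} \<times> DD. sat_tableaux (R - C) (S - D))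
      = (\<Sum>C | a \<in> C \<and> C \<subseteq> R. \<Sum>D\<in>DD. card (sat_tableaux (R - C) (S - D)))"
    using assms by (simp add: case_prod_beta sum.cartesian_product)
  then show ?thesis
    using bij_betw_same_card[OF bij_betw_block_union[OF assms(3) DD]] by simp
qed

section \<open>Sums over subsets by cardinality\<close>

lemma sum_Pow_card:
  assumes "finite X"
  shows "(\<Sum>C\<in>Pow X. h (card C)) = (\<Sum>k\<le>card X. of_nat (card X choose k) * (h k :: 'a :: semiring_1))"
proof -
  have "(\<Sum>C\<in>Pow X. h (card C)) = (\<Sum>k\<le>card X. \<Sum>C | C \<in> Pow X \<and> card C = k. h (card C))"
    by (rule sum.group[symmetric]) (use assms in \<open>auto intro: card_mono\<close>)
  also have "\<dots> = (\<Sum>k\<le>card X. of_nat (card X choose k) * h k)"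
  proof (intro sum.cong refl)
    fix k
    have "card {C. C \<in> Pow X \<and> card C = k} = card X choose k"
      using n_subsets[OF assms] by (simp add: Pow_def)
    then show "(\<Sum>C | C \<in> Pow X \<and> card C = k. h (card C)) = of_nat (card X choose k) * h k"
      by simp
  qed
  finally show ?thesis .
qed

lemma sum_subsets_containing_card_diff:
  assumes "finite R" "a \<in> R"
  shows "(\<Sum>C | a \<in> C \<and> C \<subseteq> R. h (card (R - C)))
       = (\<Sum>j\<le>card R - 1. of_nat (card R - 1 choose j) * (h j :: 'a :: semiring_1))"
proof -
  define X where "X = R - {a}"
  have "(\<Sum>C | a \<in> C \<and> C \<subseteq> R. h (card (R - C))) = (\<Sum>B\<in>Pow X. h (card B))"
  proof (rule sum.reindex_bij_witness[where i = "\<lambda>B. insert a (X - B)" and j = "\<lambda>C. R - C"])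
    fix C assume "C \<in> {C. a \<in> C \<and> C \<subseteq> R}"
    then show "insert a (X - (R - C)) = C" "R - C \<in> Pow X"
      by (auto simp: X_def)
  next
    fix B assume "B \<in> Pow X"
    then show "R - insert a (X - B) = B" "insert a (X - B) \<in> {C. a \<in> C \<and> C \<subseteq> R}"
      using assms by (auto simp: X_def)
  qed simp
  also have "\<dots> = (\<Sum>j\<le>card R - 1. of_nat (card R - 1 choose j) * h j)"
    using sum_Pow_card[of X h] assms by (simp add: X_def)
  finally show ?thesis .
qed

lemma sum_nonempty_subsets_card_diff:
  assumes "finite S"
  shows "(\<Sum>D | D \<subseteq> S \<and> D \<noteq> {}. h (card (S - D)))
       = (\<Sum>e\<in>{1..card S}. of_nat (card S choose e) * (h (card S - e) :: 'a :: semiring_1))"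
proof -
  define g where "g k = (if k = 0 then 0 else h (card S - k))" for k
  have "(\<Sum>D | D \<subseteq> S \<and> D \<noteq> {}. h (card (S - D))) = (\<Sum>D\<in>Pow S - {{}}. g (card D))"
    by (rule sum.cong) (use assms in \<open>auto simp: g_def card_Diff_subset finite_subset\<close>)
  also have "\<dots> = (\<Sum>D\<in>Pow S. g (card D))"
    using assms by (subst sum.remove[of "Pow S" "{}"]) (auto simp: g_def)
  also have "\<dots> = (\<Sum>k\<le>card S. of_nat (card S choose k) * g k)"
    by (rule sum_Pow_card[OF assms])
  also have "\<dots> = (\<Sum>e\<in>{1..card S}. of_nat (card S choose e) * h (card S - e))"
  proof -
    have "{..card S} = insert 0 {1..card S}" by auto
    then show ?thesis by (simp add: g_def)
  qed
  finally show ?thesis .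
qed

lemma sum_binomial_reflect:
  "(\<Sum>e\<le>q. of_nat (q choose e) * f e) = (\<Sum>e\<le>q. of_nat (q choose e) * (f (q - e) :: 'a :: semiring_1))"
proof -
  have "(\<Sum>e\<le>q. of_nat (q choose e) * f (q - e)) = (\<Sum>e=0..q. of_nat (q choose (q - e)) * f (q - e))"
    by (intro sum.cong) (auto simp: binomial_symmetric[symmetric] atMost_atLeast0)
  also have "\<dots> = (\<Sum>e=0..q. of_nat (q choose e) * f e)"
    using sum.atLeastAtMost_rev[of "\<lambda>e. of_nat (q choose e) * f e" 0 q] by simp
  finally show ?thesis by (simp add: atMost_atLeast0)
qed

lemma sum_card_eq_sum_card_containing:
  assumes "finite U" "finite X" "\<And>T. T \<in> X \<Longrightarrow> T \<subseteq> U"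
  shows "(\<Sum>T\<in>X. card T) = (\<Sum>c\<in>U. card {T \<in> X. c \<in> T})"
proof -
  have "(\<Sum>T\<in>X. card T) = (\<Sum>T\<in>X. \<Sum>c\<in>U. if c \<in> T then 1 else 0)"
  proof (rule sum.cong)
    fix T assume "T \<in> X"
    then have "U \<inter> T = T" using assms(3) by auto
    moreover have "(\<Sum>c\<in>U. if c \<in> T then 1 else 0) = card (U \<inter> T)"
      using assms(1) by (simp add: sum.If_cases)
    ultimately show "card T = (\<Sum>c\<in>U. if c \<in> T then 1 else 0)"
      by simp
  qed simp
  also have "\<dots> = (\<Sum>c\<in>U. \<Sum>T\<in>X. if c \<in> T then 1 else 0)"
    by (rule sum.swap)
  also have "\<dots> = (\<Sum>c\<in>U. card {T \<in> X. c \<in> T})"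
    using assms(2) by (simp add: sum.If_cases Int_def)
  finally show ?thesis .
qed

section \<open>Exponential generating functions\<close>

definition fps_expm1 :: "real fps" where
  "fps_expm1 = fps_exp 1 - 1"

definition ruc_egf :: "real fps" where
  "ruc_egf = fps_exp 1 oo (1 - fps_exp 1)"

definition shifted_power_egf :: "nat \<Rightarrow> real fps" where
  "shifted_power_egf q = Abs_fps (\<lambda>k. of_nat (k + 1) ^ q / fact k)"

definition block_egf :: "nat \<Rightarrow> real fps" where
  "block_egf q = shifted_power_egf q oo fps_expm1"

text \<open>The exponential generating function, in the number of rows, of the saturated tableaux
  with \<open>q\<close> columns (see \<open>card_sat_tableaux\<close>).\<close>
definition sat_egf :: "nat \<Rightarrow> real fps" where
  "sat_egf q = fps_exp 1 * ruc_egf * block_egf q"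

definition sat_number :: "nat \<Rightarrow> nat \<Rightarrow> real" where
  "sat_number m q = fact m * sat_egf q $ m"

lemma fps_expm1_nth_0 [simp]: "fps_expm1 $ 0 = 0"
  by (simp add: fps_expm1_def)

lemma fps_deriv_fps_expm1 [simp]: "fps_deriv fps_expm1 = fps_exp 1"
  by (simp add: fps_expm1_def)

lemma rUC_Suc_eq_ruc_egf_deriv: "rUC (Suc k) / fact k = fps_deriv ruc_egf $ k"
  by (simp add: rUC_def ruc_egf_def fact_Suc del: of_nat_Suc)

lemma fps_deriv_ruc_egf: "fps_deriv ruc_egf = - (fps_exp 1 * ruc_egf)"
proof -
  have "fps_deriv ruc_egf = (fps_deriv (fps_exp (1::real)) oo (1 - fps_exp 1)) * fps_deriv (1 - fps_exp 1)"
    unfolding ruc_egf_def by (rule fps_compose_deriv) simp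
  then show ?thesis by (simp add: ruc_egf_def)
qed

lemma fps_deriv_shifted_power_egf:
  "fps_deriv (shifted_power_egf q) = (\<Sum>e\<le>q. fps_const (of_nat (q choose e)) * shifted_power_egf (q - e))"
proof (rule fps_ext)
  fix k
  have "fps_deriv (shifted_power_egf q) $ k = of_nat (k + 2) ^ q / fact k"
    by (simp add: shifted_power_egf_def field_simps del: of_nat_Suc)
  also have "of_nat (k + 2) = (1 + of_nat (k + 1) :: real)"
    by simp
  also have "(1 + of_nat (k + 1) :: real) ^ q = (\<Sum>e\<le>q. of_nat (q choose e) * 1 ^ e * of_nat (k + 1) ^ (q - e))"
    by (rule binomial_ring)
  finally show "fps_deriv (shifted_power_egf q) $ k
      = (\<Sum>e\<le>q. fps_const (of_nat (q choose e)) * shifted_power_egf (q - e)) $ k"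
    by (simp add: fps_sum_nth shifted_power_egf_def sum_divide_distrib)
qed

lemma fps_deriv_block_egf:
  "fps_deriv (block_egf q) = fps_exp 1 * (\<Sum>e\<le>q. fps_const (of_nat (q choose e)) * block_egf (q - e))"
proof -
  have "fps_deriv (block_egf q) = (fps_deriv (shifted_power_egf q) oo fps_expm1) * fps_deriv fps_expm1"
    unfolding block_egf_def by (rule fps_compose_deriv) simp
  then show ?thesis
    by (simp add: fps_deriv_shifted_power_egf fps_compose_sum_distrib fps_compose_mult_distrib
        block_egf_def mult.commute)
qed

lemma fps_deriv_ruc_egf_mult_fps_deriv_block_egf:
  "- (fps_deriv ruc_egf * fps_deriv (block_egf q))
     = (\<Sum>e\<le>q. fps_const (of_nat (q choose e)) * (fps_exp 1 * sat_egf (q - e)))"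
  by (simp add: fps_deriv_ruc_egf fps_deriv_block_egf sat_egf_def sum_distrib_left algebra_simps sum_negf)

lemma fps_deriv_sat_egf:
  "fps_deriv (sat_egf q) = sat_egf q
     + (\<Sum>e\<in>{1..q}. fps_const (of_nat (q choose e)) * (fps_exp 1 * sat_egf (q - e)))"
proof -
  have split0: "(\<Sum>e\<le>q. f e) = f 0 + (\<Sum>e\<in>{1..q}. f e)" for f :: "nat \<Rightarrow> real fps"
    by (simp add: atMost_atLeast0 sum.atLeast_Suc_atMost)
  have "fps_deriv (sat_egf q) = sat_egf q - fps_exp 1 * sat_egf q
      + (\<Sum>e\<le>q. fps_const (of_nat (q choose e)) * (fps_exp 1 * sat_egf (q - e)))"
    by (simp add: sat_egf_def fps_deriv_ruc_egf fps_deriv_block_egf sum_distrib_left algebra_simps)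
  also have "\<dots> = sat_egf q + (\<Sum>e\<in>{1..q}. fps_const (of_nat (q choose e)) * (fps_exp 1 * sat_egf (q - e)))"
    by (subst split0) (simp add: sat_egf_def algebra_simps)
  finally show ?thesis .
qed

lemma fps_exp_mult_nth_times_fact:
  "fact m * (fps_exp 1 * F) $ m = (\<Sum>j\<le>m. of_nat (m choose j) * (fact j * F $ j :: real))"
proof -
  have "fact m * (fps_exp 1 * F) $ m = (\<Sum>i=0..m. fact m / fact i * F $ (m - i))"
    unfolding fps_mult_nth sum_distrib_left by (intro sum.cong refl) simp
  also have "\<dots> = (\<Sum>i=0..m. of_nat (m choose (m - i)) * (fact (m - i) * F $ (m - i)))"
    by (intro sum.cong refl) (simp add: binomial_fact field_simps)
  also have "\<dots> = (\<Sum>j\<le>m. of_nat (m choose j) * (fact j * F $ j))"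
    using sum.atLeastAtMost_rev[of "\<lambda>j. of_nat (m choose j) * (fact j * F $ j)" 0 m]
    by (simp add: atMost_atLeast0)
  finally show ?thesis .
qed

lemma sat_number_0_rows: "sat_number 0 q = 1"
  by (simp add: sat_number_def sat_egf_def ruc_egf_def block_egf_def shifted_power_egf_def)

lemma sat_number_Suc:
  "sat_number (Suc m) q = sat_number m q
     + (\<Sum>e\<in>{1..q}. of_nat (q choose e) * (\<Sum>j\<le>m. of_nat (m choose j) * sat_number j (q - e)))"
proof -
  have "sat_number (Suc m) q = fact m * fps_deriv (sat_egf q) $ m"
    by (simp add: sat_number_def fact_Suc)
  also have "\<dots> = sat_number m q
      + (\<Sum>e\<in>{1..q}. of_nat (q choose e) * (fact m * (fps_exp 1 * sat_egf (q - e)) $ m))"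
    by (simp add: fps_deriv_sat_egf fps_sum_nth fps_mult_left_const_nth sat_number_def
        distrib_left sum_distrib_left mult.left_commute[where 'a = real])
  also have "\<dots> = sat_number m q
      + (\<Sum>e\<in>{1..q}. of_nat (q choose e) * (\<Sum>j\<le>m. of_nat (m choose j) * sat_number j (q - e)))"
    by (simp only: fps_exp_mult_nth_times_fact sat_number_def)
  finally show ?thesis .
qed

section \<open>Counting saturated tableaux\<close>

lemma card_sat_tableaux_remove_row:
  assumes "finite R" "finite S" "r \<in> R"
  shows "card (sat_tableaux R S) = card (sat_tableaux (R - {r}) S)
           + (\<Sum>C | r \<in> C \<and> C \<subseteq> R. \<Sum>D | D \<subseteq> S \<and> D \<noteq> {}. card (sat_tableaux (R - C) (S - D)))"
proof -
  have "sat_tableaux R S = {T \<in> sat_tableaux R S. row T r = {}}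
      \<union> {T \<in> sat_tableaux R S. row T r \<in> {D. D \<subseteq> S \<and> D \<noteq> {}}}"
    by (auto simp: sat_tableaux_def row_def)
  moreover have "{T \<in> sat_tableaux R S. row T r = {}} = sat_tableaux (R - {r}) S"
    by (auto simp: sat_tableaux_def row_def)
  ultimately have "card (sat_tableaux R S) = card (sat_tableaux (R - {r}) S)
      + card {T \<in> sat_tableaux R S. row T r \<in> {D. D \<subseteq> S \<and> D \<noteq> {}}}"
    using assms by (metis (no_types, lifting) card_Un_disjoint disjoint_iff finite_sat_tableaux
        finite_Un mem_Collect_eq)
  then show ?thesis
    using card_sat_tableaux_row_in[OF assms, of "{D. D \<subseteq> S \<and> D \<noteq> {}}"] by simp
qed

lemma card_sat_tableaux:
  "finite R \<Longrightarrow> finite S \<Longrightarrow> real (card (sat_tableaux R S)) = sat_number (card R) (card S)"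
proof (induction "card R" arbitrary: R S rule: less_induct)
  case less
  show ?case
  proof (cases "R = {}")
    case True
    then show ?thesis by (simp add: sat_tableaux_empty_rows sat_number_0_rows)
  next
    case False
    then obtain r where r: "r \<in> R" by auto
    define m where "m = card R - 1"
    have "card R > 0" using r less.prems(1) card_gt_0_iff by blast
    then have card_R: "card R = Suc m" by (simp add: m_def)
    have IH: "real (card (sat_tableaux (R - C) S')) = sat_number (card (R - C)) (card S')"
      if "r \<in> C" "finite S'" for C S'
    proof -
      have "card (R - C) < card R"
        using that(1) less.prems(1) r by (intro psubset_card_mono) auto
      then show ?thesis using less.hyps[of "R - C" S'] less.prems(1) that(2) by simp
    qed
    have "real (card (sat_tableaux R S)) = real (card (sat_tableaux (R - {r}) S))
        + (\<Sum>C | r \<in> C \<and> C \<subseteq> R. \<Sum>D | D \<subseteq> S \<and> D \<noteq> {}. real (card (sat_tableaux (R - C) (S - D))))"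
      using card_sat_tableaux_remove_row[OF less.prems r] by (simp only: of_nat_add of_nat_sum)
    also have "\<dots> = sat_number m (card S)
        + (\<Sum>C | r \<in> C \<and> C \<subseteq> R. \<Sum>D | D \<subseteq> S \<and> D \<noteq> {}. sat_number (card (R - C)) (card (S - D)))"
      using IH[of "{r}" S] IH less.prems r by (simp add: m_def card_Diff_singleton)
    also have "\<dots> = sat_number m (card S)
        + (\<Sum>D | D \<subseteq> S \<and> D \<noteq> {}. \<Sum>C | r \<in> C \<and> C \<subseteq> R. sat_number (card (R - C)) (card (S - D)))"
      by (subst sum.swap) (rule refl)
    also have "\<dots> = sat_number m (card S)
        + (\<Sum>D | D \<subseteq> S \<and> D \<noteq> {}. \<Sum>j\<le>m. of_nat (m choose j) * sat_number j (card (S - D)))"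
      unfolding m_def by (intro arg_cong2[where f = "(+)"] sum.cong refl sum_subsets_containing_card_diff[OF less.prems(1) r])
    also have "\<dots> = sat_number (card R) (card S)"
      using sum_nonempty_subsets_card_diff[OF less.prems(2)] by (simp add: sat_number_Suc card_R)
    finally show ?thesis .
  qed
qed

definition marked_sat_number :: "nat \<Rightarrow> nat \<Rightarrow> real" where
  "marked_sat_number m q
     = (\<Sum>e\<le>q. of_nat (q choose e) * (\<Sum>j\<le>m. of_nat (m choose j) * sat_number j (q - e)))"

lemma card_marked_sat_tableaux:
  assumes R: "finite R" "a \<in> R" and S: "finite S" "b \<in> S"
  shows "real (card {T \<in> sat_tableaux R S. (a, b) \<in> T}) = marked_sat_number (card R - 1) (card S - 1)"
proof -
  have "{T \<in> sat_tableaux R S. (a, b) \<in> T} = {T \<in> sat_tableaux R S. row T a \<in> {D. b \<in> D \<and> D \<subseteq> S}}"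
    by (auto simp: sat_tableaux_def row_def)
  also have "card \<dots> = (\<Sum>C | a \<in> C \<and> C \<subseteq> R. \<Sum>D | b \<in> D \<and> D \<subseteq> S. card (sat_tableaux (R - C) (S - D)))"
    by (rule card_sat_tableaux_row_in) (use R S in auto)
  finally have "real (card {T \<in> sat_tableaux R S. (a, b) \<in> T})
      = (\<Sum>C | a \<in> C \<and> C \<subseteq> R. \<Sum>D | b \<in> D \<and> D \<subseteq> S. real (card (sat_tableaux (R - C) (S - D))))"
    by (simp only: of_nat_sum)
  also have "\<dots> = (\<Sum>C | a \<in> C \<and> C \<subseteq> R. \<Sum>D | b \<in> D \<and> D \<subseteq> S. sat_number (card (R - C)) (card (S - D)))"
    using R(1) S(1) by (simp add: card_sat_tableaux)
  also have "\<dots> = (\<Sum>C | a \<in> C \<and> C \<subseteq> R.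
      \<Sum>e\<le>card S - 1. of_nat (card S - 1 choose e) * sat_number (card (R - C)) e)"
    by (intro sum.cong refl sum_subsets_containing_card_diff[OF S])
  also have "\<dots> = (\<Sum>e\<le>card S - 1. of_nat (card S - 1 choose e)
      * (\<Sum>C | a \<in> C \<and> C \<subseteq> R. sat_number (card (R - C)) e))"
    by (subst sum.swap) (simp only: sum_distrib_left)
  also have "\<dots> = (\<Sum>e\<le>card S - 1. of_nat (card S - 1 choose e)
      * (\<Sum>j\<le>card R - 1. of_nat (card R - 1 choose j) * sat_number j e))"
    by (intro sum.cong refl arg_cong2[where f = "(*)"] sum_subsets_containing_card_diff[OF R])
  also have "\<dots> = marked_sat_number (card R - 1) (card S - 1)"
    unfolding marked_sat_number_def by (rule sum_binomial_reflect)
  finally show ?thesis .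
qed

lemma pderiv_sum: "pderiv (sum f A) = (\<Sum>x\<in>A. pderiv (f x))"
  using higher_pderiv_sum[of 1 f A] by simp

lemma poly_pderiv_alpha_poly_1_eq_sum_card:
  "poly (pderiv (alpha_poly n p)) 1 = real (\<Sum>T\<in>sat_tableaux {0..<n} {0..<p}. card T)"
proof -
  let ?Sat = "sat_tableaux {0..<n} {0..<p}"
  have "poly (pderiv (alpha_poly n p)) 1 = real (\<Sum>j\<le>n * p. j * alpha_coeff j n p)"
    unfolding alpha_poly_def pderiv_sum poly_sum by (simp add: pderiv_monom poly_monom)
  also have "(\<Sum>j\<le>n * p. j * alpha_coeff j n p) = (\<Sum>j\<le>n * p. \<Sum>T | T \<in> ?Sat \<and> card T = j. card T)"
    by (intro sum.cong refl) (simp add: alpha_coeff_def tableau_def sat_tableaux_def conj_assoc)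
  also have "\<dots> = (\<Sum>T\<in>?Sat. card T)"
  proof (rule sum.group)
    show "card ` ?Sat \<subseteq> {..n * p}"
      using card_mono[of "{0..<n} \<times> {0..<p}"] by (auto simp: sat_tableaux_def)
  qed simp_all
  finally show ?thesis .
qed

lemma poly_pderiv_alpha_poly_1:
  "poly (pderiv (alpha_poly n p)) 1 = real n * real p * marked_sat_number (n - 1) (p - 1)"
proof -
  let ?Sat = "sat_tableaux {0..<n} {0..<p}"
  have "(\<Sum>T\<in>?Sat. card T) = (\<Sum>c\<in>{0..<n} \<times> {0..<p}. card {T \<in> ?Sat. c \<in> T})"
    by (rule sum_card_eq_sum_card_containing) (auto simp: sat_tableaux_def)
  then have "poly (pderiv (alpha_poly n p)) 1 = (\<Sum>c\<in>{0..<n} \<times> {0..<p}. real (card {T \<in> ?Sat. c \<in> T}))"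
    by (simp add: poly_pderiv_alpha_poly_1_eq_sum_card)
  also have "\<dots> = (\<Sum>c\<in>{0..<n} \<times> {0..<p}. marked_sat_number (n - 1) (p - 1))"
    by (intro sum.cong refl) (auto simp: card_marked_sat_tableaux)
  finally show ?thesis by simp
qed

section \<open>Sums over integer partitions\<close>

lemma member_le_sum_mset: "x \<in># (M :: nat multiset) \<Longrightarrow> x \<le> sum_mset M"
  by (induction M) auto

lemma size_le_sum_mset: "\<forall>k\<in>#M. 0 < k \<Longrightarrow> size M \<le> sum_mset (M :: nat multiset)"
  by (induction M) auto

lemma finite_partitions_of [simp]: "finite (partitions_of i)"
proof (rule finite_subset)
  show "partitions_of i \<subseteq> (\<Union>s\<le>i. multisets_of_size {0..i} s)"
    using size_le_sum_mset member_le_sum_mset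
    by (fastforce simp: partitions_of_def multisets_of_size_def)
qed auto

lemma partitions_of_0: "partitions_of 0 = {{#}}"
proof -
  have "lam = {#}" if "\<forall>k\<in>#lam. 0 < k" "sum_mset lam = 0" for lam :: "nat multiset"
    using that by (cases lam) auto
  then show ?thesis by (auto simp: partitions_of_def)
qed

lemma part_fact_empty [simp]: "part_fact {#} = 1"
  by (simp add: part_fact_def)

lemma part_fact_add_mset: "part_fact (add_mset x M) = part_fact M * fact x * of_nat (count M x + 1)"
proof -
  have "(\<Prod>i\<in>set_mset (add_mset x M). fact (count (add_mset x M) i) :: real)
      = of_nat (count M x + 1) * (\<Prod>i\<in>set_mset M. fact (count M i))"
  proof (cases "x \<in># M")
    case True
    then show ?thesis
      by (simp add: insert_absorb prod.remove[of "set_mset M" x] algebra_simps)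
  next
    case False
    then have "(\<Prod>i\<in>set_mset M. fact (count (add_mset x M) i) :: real) = (\<Prod>i\<in>set_mset M. fact (count M i))"
      by (intro prod.cong) auto
    then show ?thesis using False by (simp add: not_in_iff)
  qed
  then show ?thesis by (simp add: part_fact_def algebra_simps)
qed

lemma part_fact_pos: "part_fact M > 0"
  by (induction M) (simp_all add: part_fact_add_mset)

lemma of_nat_sum_mset_eq_sum_count:
  "of_nat (sum_mset M) = (\<Sum>x\<in>set_mset M. of_nat (count M x) * (of_nat x :: 'a :: semiring_1))"
proof (induction M)
  case (add x M)
  show ?case
  proof (cases "x \<in># M")
    case True
    then show ?thesis using add
      by (simp add: insert_absorb sum.remove[of "set_mset M" x] algebra_simps)
  next
    case False
    then have "(\<Sum>y\<in>set_mset M. of_nat (count (add_mset x M) y) * (of_nat y :: 'a))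
        = (\<Sum>y\<in>set_mset M. of_nat (count M y) * of_nat y)"
      by (intro sum.cong) auto
    then show ?thesis using add False by (simp add: not_in_iff)
  qed
qed simp

definition partition_weight :: "nat \<Rightarrow> nat \<Rightarrow> real" where
  "partition_weight i k = (\<Sum>lam | lam \<in> partitions_of i \<and> size lam = k. 1 / part_fact lam)"

lemma partition_weight_0_parts: "partition_weight i 0 = (if i = 0 then 1 else 0)"
proof -
  have "{lam. lam \<in> partitions_of i \<and> size lam = 0} = (if i = 0 then {{#}} else {})"
    by (auto simp: partitions_of_def)
  then show ?thesis by (simp add: partition_weight_def)
qed

lemma partition_weight_0_Suc: "partition_weight 0 (Suc k) = 0"
  by (simp add: partition_weight_def partitions_of_0)

lemma count_times_part_div_part_fact:
  assumes "x \<in># lam" "0 < x"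
  shows "real (count lam x) * real x / part_fact lam = 1 / (fact (x - 1) * part_fact (lam - {#x#}))"
proof -
  define lam' where "lam' = lam - {#x#}"
  have lam: "lam = add_mset x lam'" using assms by (simp add: lam'_def)
  have "(fact x :: real) = real x * fact (x - 1)"
    using assms by (simp add: fact_reduce)
  then have "part_fact lam = part_fact lam' * (real x * fact (x - 1)) * real (count lam x)"
    using part_fact_add_mset[of x lam'] lam by simp
  then show ?thesis
    using part_fact_pos[of lam'] assms by (simp add: lam'_def field_simps)
qed

text \<open>Removing one part \<open>x\<close> from a partition of \<open>i + 1\<close> into \<open>k + 1\<close> parts leaves a partition of
  \<open>j = i + 1 - x\<close> into \<open>k\<close> parts, and every such pair arises exactly once.\<close>
lemma sum_partitions_Suc_remove_part:
  "(\<Sum>lam | lam \<in> partitions_of (Suc i) \<and> size lam = Suc k. \<Sum>x\<in>set_mset lam. f lam x)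
     = (\<Sum>j=0..i. \<Sum>mu | mu \<in> partitions_of j \<and> size mu = k. f (add_mset (Suc i - j) mu) (Suc i - j))"
proof -
  let ?A = "{lam. lam \<in> partitions_of (Suc i) \<and> size lam = Suc k}"
    and ?B = "\<lambda>j. {mu. mu \<in> partitions_of j \<and> size mu = k}"
  have "(\<Sum>lam\<in>?A. \<Sum>x\<in>set_mset lam. f lam x) = (\<Sum>(lam, x)\<in>(SIGMA lam:?A. set_mset lam). f lam x)"
    by (rule sum.Sigma) auto
  also have "\<dots> = (\<Sum>(j, mu)\<in>(SIGMA j:{0..i}. ?B j). f (add_mset (Suc i - j) mu) (Suc i - j))"
  proof (rule sum.reindex_bij_witness[where i = "\<lambda>(j, mu). (add_mset (Suc i - j) mu, Suc i - j)"
        and j = "\<lambda>(lam, x). (Suc i - x, lam - {#x#})"], goal_cases)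
    case (1 a)
    then obtain lam x where "a = (lam, x)" "x \<in># lam" "lam \<in> partitions_of (Suc i)" by auto
    moreover from this have "x \<le> Suc i" using member_le_sum_mset[of x lam] by (simp add: partitions_of_def)
    ultimately show ?case by simp
  next
    case (2 a)
    then obtain lam x where a: "a = (lam, x)" "x \<in># lam" "size lam = Suc k"
      and pos: "\<forall>k\<in>#lam. 0 < k" and sum: "sum_mset lam = Suc i"
      by (auto simp: partitions_of_def)
    have "sum_mset (lam - {#x#}) = Suc i - x"
      using sum sum_mset.remove[OF a(2)] by simp
    then show ?case
      using a pos by (auto simp: partitions_of_def size_Diff_singleton dest: in_diffD)
  next
    case (3 b)
    then show ?case by auto
  next
    case (4 b)
    then show ?case by (auto simp: partitions_of_def)
  next
    case (5 a)
    then obtain lam x where "a = (lam, x)" "x \<in># lam" "lam \<in> partitions_of (Suc i)" by auto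
    moreover from this have "x \<le> Suc i" using member_le_sum_mset[of x lam] by (simp add: partitions_of_def)
    ultimately show ?case by (simp add: Suc_diff_le)
  qed
  also have "\<dots> = (\<Sum>j=0..i. \<Sum>mu\<in>?B j. f (add_mset (Suc i - j) mu) (Suc i - j))"
    by (rule sum.Sigma[symmetric]) auto
  finally show ?thesis .
qed

lemma partition_weight_Suc_Suc:
  "real (Suc i) * partition_weight (Suc i) (Suc k) = (\<Sum>j=0..i. partition_weight j k / fact (i - j))"
proof -
  let ?A = "{lam. lam \<in> partitions_of (Suc i) \<and> size lam = Suc k}"
  have "real (Suc i) * partition_weight (Suc i) (Suc k) = (\<Sum>lam\<in>?A. real (sum_mset lam) / part_fact lam)"
    unfolding partition_weight_def sum_distrib_left by (intro sum.cong) (auto simp: partitions_of_def)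
  also have "\<dots> = (\<Sum>lam\<in>?A. \<Sum>x\<in>set_mset lam. real (count lam x) * real x / part_fact lam)"
    by (simp only: of_nat_sum_mset_eq_sum_count sum_divide_distrib)
  also have "\<dots> = (\<Sum>lam\<in>?A. \<Sum>x\<in>set_mset lam. 1 / (fact (x - 1) * part_fact (lam - {#x#})))"
    by (intro sum.cong refl count_times_part_div_part_fact) (auto simp: partitions_of_def)
  also have "\<dots> = (\<Sum>j=0..i. \<Sum>mu | mu \<in> partitions_of j \<and> size mu = k. 1 / (fact (i - j) * part_fact mu))"
    by (simp add: sum_partitions_Suc_remove_part)
  also have "\<dots> = (\<Sum>j=0..i. partition_weight j k / fact (i - j))"
    unfolding partition_weight_def sum_divide_distrib by (simp add: field_simps)
  finally show ?thesis .
qed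

lemma partition_weight_fps: "Abs_fps (\<lambda>i. partition_weight i k) = fps_const (1 / fact k) * fps_expm1 ^ k"
proof (induction k)
  case 0
  show ?case by (rule fps_ext) (simp add: partition_weight_0_parts)
next
  case (Suc k)
  have "fps_deriv (Abs_fps (\<lambda>i. partition_weight i (Suc k))) = Abs_fps (\<lambda>i. partition_weight i k) * fps_exp 1"
    by (rule fps_ext) (simp add: partition_weight_Suc_Suc fps_mult_nth del: of_nat_Suc)
  also have "\<dots> = fps_deriv (fps_const (1 / fact (Suc k)) * fps_expm1 ^ Suc k)"
    by (simp add: Suc.IH fps_deriv_power fps_const_mult[symmetric] mult_ac fact_Suc field_simps
        del: of_nat_Suc power_Suc fps_const_mult)
  finally have "Abs_fps (\<lambda>i. partition_weight i (Suc k))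
      = fps_const (partition_weight 0 (Suc k) - (fps_const (1 / fact (Suc k)) * fps_expm1 ^ Suc k) $ 0)
        + fps_const (1 / fact (Suc k)) * fps_expm1 ^ Suc k"
    unfolding fps_deriv_eq_iff by simp
  then show ?case
    by (simp add: partition_weight_0_Suc startsby_zero_power del: power_Suc)
qed

lemma partition_weight_eq: "partition_weight i k = (fps_expm1 ^ k) $ i / fact k"
  using arg_cong[OF partition_weight_fps[of k], of "\<lambda>F. F $ i"] by simp

lemma P_part_add_mset: "P_part (add_mset x M) = monom 1 x + P_part M"
  by (simp add: P_part_def)

lemma poly_P_part_1: "poly (P_part lam) 1 = real (size lam)"
  by (induction lam) (simp_all add: P_part_add_mset poly_monom, simp add: P_part_def)

lemma poly_pderiv_P_part_1: "poly (pderiv (P_part lam)) 1 = real (sum_mset lam)"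
  by (induction lam) (simp_all add: P_part_add_mset poly_monom pderiv_add pderiv_monom, simp add: P_part_def)

lemma sum_partitions_by_size:
  "(\<Sum>lam\<in>partitions_of i. f (size lam) / part_fact lam) = (\<Sum>k=0..i. f k * partition_weight i k)"
proof -
  have "(\<Sum>lam\<in>partitions_of i. f (size lam) / part_fact lam)
      = (\<Sum>k=0..i. \<Sum>lam | lam \<in> partitions_of i \<and> size lam = k. f (size lam) / part_fact lam)"
  proof (rule sum.group[symmetric])
    show "size ` partitions_of i \<subseteq> {0..i}"
      using size_le_sum_mset by (auto simp: partitions_of_def)
  qed simp_all
  also have "\<dots> = (\<Sum>k=0..i. f k * partition_weight i k)"
    unfolding partition_weight_def sum_distrib_left by (intro sum.cong refl) auto
  finally show ?thesis .
qed

lemma sum_partitions_eq_block_egf_nth: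
  "(\<Sum>lam\<in>partitions_of i. poly (pderiv (P_part lam)) 1 * (1 + poly (P_part lam) 1) ^ q / part_fact lam)
     = real i * block_egf q $ i"
proof -
  have "(\<Sum>lam\<in>partitions_of i. poly (pderiv (P_part lam)) 1 * (1 + poly (P_part lam) 1) ^ q / part_fact lam)
      = real i * (\<Sum>lam\<in>partitions_of i. (1 + real (size lam)) ^ q / part_fact lam)"
    unfolding sum_distrib_left
    by (intro sum.cong refl) (simp add: poly_P_part_1 poly_pderiv_P_part_1 partitions_of_def)
  also have "(\<Sum>lam\<in>partitions_of i. (1 + real (size lam)) ^ q / part_fact lam)
      = (\<Sum>k=0..i. (1 + real k) ^ q * partition_weight i k)"
    by (rule sum_partitions_by_size)
  also have "\<dots> = block_egf q $ i"
    unfolding block_egf_def fps_compose_nth partition_weight_eq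
    by (intro sum.cong refl) (simp add: shifted_power_egf_def add.commute)
  finally show ?thesis .
qed

lemma sum_ruc_partitions_eq_nth:
  "(\<Sum>i = 0..Suc m. rUC (Suc m - i + 1) / fact (Suc m - i) *
      (\<Sum>lam\<in>partitions_of i. poly (pderiv (P_part lam)) 1 * (1 + poly (P_part lam) 1) ^ q / part_fact lam))
     = (fps_deriv ruc_egf * fps_deriv (block_egf q)) $ m"
proof -
  have "(\<Sum>i = 0..Suc m. rUC (Suc m - i + 1) / fact (Suc m - i) *
      (\<Sum>lam\<in>partitions_of i. poly (pderiv (P_part lam)) 1 * (1 + poly (P_part lam) 1) ^ q / part_fact lam))
      = (\<Sum>i = 0..Suc m. fps_deriv ruc_egf $ (Suc m - i) * (real i * block_egf q $ i))"
    by (simp only: sum_partitions_eq_block_egf_nth Suc_eq_plus1[symmetric] rUC_Suc_eq_ruc_egf_deriv)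
  also have "\<dots> = (\<Sum>i = 0..m. fps_deriv ruc_egf $ (m - i) * fps_deriv (block_egf q) $ i)"
    by (subst sum.atLeast0_atMost_Suc_shift) (simp add: algebra_simps del: of_nat_Suc)
  also have "\<dots> = (fps_deriv (block_egf q) * fps_deriv ruc_egf) $ m"
    unfolding fps_mult_nth by (intro sum.cong refl) (simp add: mult.commute)
  finally show ?thesis by (simp only: mult.commute)
qed

lemma marked_sat_number_eq_nth:
  "marked_sat_number m q = - fact m * (fps_deriv ruc_egf * fps_deriv (block_egf q)) $ m"
proof -
  have "- fact m * (fps_deriv ruc_egf * fps_deriv (block_egf q)) $ m
      = (\<Sum>e\<le>q. of_nat (q choose e) * (fact m * (fps_exp 1 * sat_egf (q - e)) $ m))"
    using arg_cong[OF fps_deriv_ruc_egf_mult_fps_deriv_block_egf[of q], of "\<lambda>F. fact m * F $ m"]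
    by (simp add: fps_sum_nth fps_mult_left_const_nth sum_distrib_left mult.left_commute[where 'a = real])
  then show ?thesis
    by (simp only: marked_sat_number_def fps_exp_mult_nth_times_fact sat_number_def)
qed

theorem proposition2:
  fixes n p a b :: nat
  assumes "1 \<le> n" and "1 \<le> p" and "a < n" and "b < p"
  shows "real (card {T. tableau n p T \<and> saturated T \<and> (a, b) \<in> T})
           = poly (pderiv (alpha_poly n p)) 1 / (real n * real p)
       \<and> poly (pderiv (alpha_poly n p)) 1 / (real n * real p)
           = - fact (n - 1) * (\<Sum>i = 0..n. rUC (n - i + 1) / fact (n - i) *
                 (\<Sum>lam\<in>partitions_of i.
                     poly (pderiv (P_part lam)) 1 * (1 + poly (P_part lam) 1) ^ (p - 1)
                     / part_fact lam))"
proof -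
  obtain m where m: "n = Suc m" using assms(1) by (cases n) auto
  have "{T. tableau n p T \<and> saturated T \<and> (a, b) \<in> T} = {T \<in> sat_tableaux {0..<n} {0..<p}. (a, b) \<in> T}"
    by (auto simp: tableau_def sat_tableaux_def)
  then have "real (card {T. tableau n p T \<and> saturated T \<and> (a, b) \<in> T}) = marked_sat_number (n - 1) (p - 1)"
    using card_marked_sat_tableaux[of "{0..<n}" a "{0..<p}" b] assms(3,4) by simp
  moreover have "poly (pderiv (alpha_poly n p)) 1 / (real n * real p) = marked_sat_number (n - 1) (p - 1)"
    using assms(1,2) by (simp add: poly_pderiv_alpha_poly_1)
  moreover have "- fact (n - 1) * (\<Sum>i = 0..n. rUC (n - i + 1) / fact (n - i) *
      (\<Sum>lam\<in>partitions_of i. poly (pderiv (P_part lam)) 1 * (1 + poly (P_part lam) 1) ^ (p - 1)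
        / part_fact lam)) = marked_sat_number (n - 1) (p - 1)"
    unfolding m by (simp only: sum_ruc_partitions_eq_nth marked_sat_number_eq_nth diff_Suc_1)
  ultimately show ?thesis by simp
qed

end
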